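(* Let $f:[0,1]\to\mathbb{R}$ be bounded and let $0<b<1$. Assume that $f(t)=c$ for all $t\in[0,b)$, for some real constant $c$. Then for every $n\in\mathbb{N}$ and every $x\in(0,b)$, \[ |B_nf(x)-f(x)|\leq \|f-c\|\,e^{-nr(x,b)}. \]
   Context: For a bounded function $f:[0,1]\to\mathbb{R}$, $\|f\|=\sup_{t\in[0,1]}|f(t)|$, and $\|f-c\|$ is the supremum norm of $t\mapsto f(t)-c$. The $n$th Bernstein polynomial of $f$ is $B_nf(x)=\sum_{j=0}^n f(j/n)\binom{n}{j}x^j(1-x)^{n-j}$, $x\in[0,1]$. For $x,\theta\in(0,1)$, $r(x,\theta)=\theta\log\frac{\theta}{x}+(1-\theta)\log\frac{1-\theta}{1-x}$. *)

theory Defs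
  imports "HOL-Analysis.Analysis"
begin

definition supnorm01 :: "(real \<Rightarrow> real) \<Rightarrow> real" where
  "supnorm01 g = (SUP t\<in>{0..1}. \<bar>g t\<bar>)"

definition bernstein :: "nat \<Rightarrow> (real \<Rightarrow> real) \<Rightarrow> real \<Rightarrow> real" where
  "bernstein n f x = (\<Sum>j=0..n. f (real j / real n) * real (n choose j) * x ^ j * (1 - x) ^ (n - j))"

definition rfun :: "real \<Rightarrow> real \<Rightarrow> real" where
  "rfun x \<theta> = \<theta> * ln (\<theta> / x) + (1 - \<theta>) * ln ((1 - \<theta>) / (1 - x))"

end

theory Submission
  imports Defs
begin

text \<open>
  Since f(x) = c and the Bernstein weights sum to one, B_n f(x) - f(x) is the Bernstein
  average of f - c, which only sees the nodes j/n >= b. It is therefore at most ||f - c||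
  times the binomial tail probability P(S_n >= nb) with S_n ~ Bin(n, x), and the Chernoff
  bound P(S_n >= nb) <= s^(-nb) E[s^S_n] at the optimal s = b(1-x)/(x(1-b)) equals
  exp(-n r(x, b)).
\<close>

definition bernstein_basis :: "nat \<Rightarrow> nat \<Rightarrow> real \<Rightarrow> real" where
  "bernstein_basis n j x = real (n choose j) * x ^ j * (1 - x) ^ (n - j)"

lemma bernstein_basis_nonneg: "0 \<le> x \<Longrightarrow> x \<le> 1 \<Longrightarrow> 0 \<le> bernstein_basis n j x"
  unfolding bernstein_basis_def by simp

lemma sum_bernstein_basis: "(\<Sum>j=0..n. bernstein_basis n j x) = 1"
  using binomial_ring[of x "1 - x" n] by (simp add: bernstein_basis_def atMost_atLeast0)

lemma bernstein_eq_sum_basis: "bernstein n f x = (\<Sum>j=0..n. f (real j / real n) * bernstein_basis n j x)"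
  unfolding bernstein_def bernstein_basis_def by (simp add: mult.assoc)

lemma bernstein_diff_const:
  "bernstein n f x - c = bernstein n (\<lambda>t. f t - c) x"
  using sum_bernstein_basis[of n x]
  by (simp add: bernstein_eq_sum_basis left_diff_distrib sum_subtractf flip: sum_distrib_left)

lemma abs_le_supnorm01:
  assumes "bounded (g ` {0..1})" and "t \<in> {0..1}"
  shows "\<bar>g t\<bar> \<le> supnorm01 g"
proof -
  have "bdd_above ((\<lambda>t. \<bar>g t\<bar>) ` {0..1})"
    using assms(1) unfolding bounded_iff by (auto intro: bdd_aboveI2)
  then show ?thesis
    unfolding supnorm01_def using assms(2) by (intro cSUP_upper) auto
qed

lemma bounded_image_diff_const:
  fixes f :: "'a \<Rightarrow> 'b::real_normed_vector"
  shows "bounded (f ` A) \<Longrightarrow> bounded ((\<lambda>t. f t - c) ` A)"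
  using bounded_translation[of "f ` A" "- c"] by (simp add: image_image)

lemma bernstein_tail_le:
  fixes a s x :: real
  assumes "1 \<le> s" and "0 \<le> x" and "x \<le> 1"
  shows "(\<Sum>j\<in>{j\<in>{0..n}. a \<le> real j}. bernstein_basis n j x) \<le> s powr (- a) * (x * s + (1 - x)) ^ n"
proof -
  have "(\<Sum>j\<in>{j\<in>{0..n}. a \<le> real j}. bernstein_basis n j x)
      \<le> (\<Sum>j\<in>{j\<in>{0..n}. a \<le> real j}. s powr (real j - a) * bernstein_basis n j x)"
  proof (intro sum_mono)
    fix j assume "j \<in> {j\<in>{0..n}. a \<le> real j}"
    then have "1 \<le> s powr (real j - a)"
      using assms(1) by (simp add: ge_one_powr_ge_zero)
    then show "bernstein_basis n j x \<le> s powr (real j - a) * bernstein_basis n j x"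
      using mult_right_mono[OF _ bernstein_basis_nonneg[OF assms(2,3)], of 1 _ n j] by simp
  qed
  also have "\<dots> \<le> (\<Sum>j=0..n. s powr (real j - a) * bernstein_basis n j x)"
    using assms by (intro sum_mono2) (auto intro!: mult_nonneg_nonneg bernstein_basis_nonneg)
  also have "\<dots> = s powr (- a) * (\<Sum>j=0..n. real (n choose j) * (x * s) ^ j * (1 - x) ^ (n - j))"
    using assms(1)
    by (simp add: sum_distrib_left bernstein_basis_def powr_diff powr_minus_divide powr_realpow
        power_mult_distrib field_simps)
  also have "\<dots> = s powr (- a) * (x * s + (1 - x)) ^ n"
    using binomial_ring[of "x * s" "1 - x" n] by (simp add: atMost_atLeast0)
  finally show ?thesis .
qed

lemma binomial_mgf_chernoff_optimum:
  fixes x b :: real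
  assumes "0 < x" "x < 1" "0 < b" "b < 1"
  defines "s \<equiv> b * (1 - x) / (x * (1 - b))"
  shows "s powr (- (real n * b)) * (x * s + (1 - x)) ^ n = exp (- real n * rfun x b)"
proof -
  define q where "q = (1 - x) / (1 - b)"
  have "q > 0" "s > 0"
    using assms unfolding q_def s_def by (auto intro!: divide_pos_pos)
  have mgf: "x * s + (1 - x) = q"
    using assms unfolding s_def q_def by (simp add: field_simps)
  have ln_s: "ln s = ln (b / x) + ln q"
    using assms unfolding s_def q_def by (simp add: ln_div ln_mult)
  have rfun_q: "rfun x b = b * ln (b / x) - (1 - b) * ln q"
    using assms unfolding rfun_def q_def by (simp add: ln_div algebra_simps)
  have "s powr (- (real n * b)) * (x * s + (1 - x)) ^ n
      = exp (- (real n * b) * ln s) * exp (real n * ln q)"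
    unfolding mgf using \<open>s > 0\<close> \<open>q > 0\<close> by (simp add: powr_def exp_of_nat_mult mult.commute)
  also have "\<dots> = exp (- real n * rfun x b)"
    unfolding ln_s rfun_q exp_add[symmetric] by (simp add: algebra_simps)
  finally show ?thesis .
qed

lemma bernstein_vanishing_below_le:
  assumes g_le: "\<And>t. t \<in> {0..1} \<Longrightarrow> \<bar>g t\<bar> \<le> M"
    and g_zero: "\<And>t. t \<in> {0..<b} \<Longrightarrow> g t = 0"
    and x: "0 < x" "x < b" and "b < 1"
  shows "\<bar>bernstein n g x\<bar> \<le> M * exp (- real n * rfun x b)"
proof -
  define s where "s = b * (1 - x) / (x * (1 - b))"
  have "1 \<le> s"
    using x \<open>b < 1\<close> unfolding s_def by (simp add: field_simps mult_right_mono)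
  have basis_nonneg: "0 \<le> bernstein_basis n j x" for j
    using x \<open>b < 1\<close> by (intro bernstein_basis_nonneg) auto
  have "0 \<le> M"
    using g_le[of 0] by auto
  have node: "real j / real n \<in> {0..1}" if "j \<le> n" for j
    using that by (cases "n = 0") (auto simp: field_simps)
  have tail: "real n * b \<le> real j" if "j \<le> n" "g (real j / real n) \<noteq> 0" for j
  proof -
    have "b \<le> real j / real n"
      using that g_zero[of "real j / real n"] by force
    then show ?thesis
      using x by (cases "n = 0") (auto simp: field_simps)
  qed
  have "\<bar>bernstein n g x\<bar> \<le> (\<Sum>j=0..n. \<bar>g (real j / real n)\<bar> * bernstein_basis n j x)"
    unfolding bernstein_eq_sum_basis
    using sum_abs[of "\<lambda>j. g (real j / real n) * bernstein_basis n j x" "{0..n}"] basis_nonneg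
    by (simp add: abs_mult)
  also have "\<dots> = (\<Sum>j\<in>{j\<in>{0..n}. real n * b \<le> real j}. \<bar>g (real j / real n)\<bar> * bernstein_basis n j x)"
    using tail by (intro sum.mono_neutral_right) auto
  also have "\<dots> \<le> (\<Sum>j\<in>{j\<in>{0..n}. real n * b \<le> real j}. M * bernstein_basis n j x)"
    using basis_nonneg g_le node by (intro sum_mono mult_right_mono) auto
  also have "\<dots> \<le> M * (s powr (- (real n * b)) * (x * s + (1 - x)) ^ n)"
    unfolding sum_distrib_left[symmetric]
    using \<open>1 \<le> s\<close> x \<open>b < 1\<close> \<open>0 \<le> M\<close> by (intro mult_left_mono bernstein_tail_le) auto
  also have "\<dots> = M * exp (- real n * rfun x b)"
    using x \<open>b < 1\<close> unfolding s_def by (subst binomial_mgf_chernoff_optimum) auto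
  finally show ?thesis .
qed

theorem corollary1:
  fixes f :: "real \<Rightarrow> real" and b c :: real
  assumes "bounded (f ` {0..1})"
    and "0 < b" and "b < 1"
    and "\<And>t. t \<in> {0..<b} \<Longrightarrow> f t = c"
  shows "\<forall>n::nat. \<forall>x\<in>{0<..<b}.
           \<bar>bernstein n f x - f x\<bar> \<le> supnorm01 (\<lambda>t. f t - c) * exp (- real n * rfun x b)"
proof (intro allI ballI)
  fix n :: nat and x :: real
  assume x: "x \<in> {0<..<b}"
  then have "bernstein n f x - f x = bernstein n (\<lambda>t. f t - c) x"
    using assms(4)[of x] bernstein_diff_const by auto
  also have "\<bar>\<dots>\<bar> \<le> supnorm01 (\<lambda>t. f t - c) * exp (- real n * rfun x b)"
    using x assms
    by (intro bernstein_vanishing_below_le abs_le_supnorm01 bounded_image_diff_const) auto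
  finally show "\<bar>bernstein n f x - f x\<bar> \<le> supnorm01 (\<lambda>t. f t - c) * exp (- real n * rfun x b)" .
qed

end
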